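(* Let $$ \eta_u A^{(u)} = \left[\begin{array}{cccccc} \tau_1^2+\tau_s^2+\tau_c^2 & 2\tau_1\tau_s & 2\tau_1\tau_c & 2\tau_c\tau_s & 0 & 0\\ 2\tau_1\tau_s & \tau_1^2+\tau_s^2+\tau_c^2 & 2\tau_c\tau_s & 2\tau_1\tau_c & 0 & 0\\ 2\tau_1\tau_c & 2\tau_c\tau_s & \tau_1^2+\tau_s^2+\tau_c^2 & 2\tau_1\tau_s & 0 & 0\\ 2\tau_c\tau_s & 2\tau_1\tau_c & 2\tau_1\tau_s & \tau_1^2+\tau_s^2+\tau_c^2 & 0 & 0\\ 0 & 0 & 0 & 0 & 2\tau_1^2 & 2\tau_1^2\\ 0 & 0 & 0 & 0 & 2\tau_1^2 & 2\tau_1^2 \end{array}\right],$$ $$ A = \eta_u A^{(u)} + \left[\begin{array}{cccccc} (\tau_1+\tau_s)^2 & (\tau_1+\tau_s)^2 & \tau_c(\tau_1+\tau_s) & \tau_c(\tau_1+\tau_s) & 0 & 0\\ (\tau_1+\tau_s)^2 & (\tau_1+\tau_s)^2 & \tau_c(\tau_1+\tau_s) & \tau_c(\tau_1+\tau_s) & 0 & 0\\ \tau_c(\tau_1+\tau_s) & \tau_c(\tau_1+\tau_s) & \tau_c^2 & \tau_c^2 & 0 & 0\\ \tau_c(\tau_1+\tau_s) & \tau_c(\tau_1+\tau_s) & \tau_c^2 & \tau_c^2 & 0 & 0\\ 0 & 0 & 0 & 0 & 0 & 0\\ 0 & 0 & 0 & 0 & 0 & 0 \end{array}\right],$$ and assume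 $1 \gg \frac{\tau_c}{\tau_1} > \frac{\tau_s}{\tau_1} > 0$, $\frac{4}{9}\tau_c \le \tau_s \le \tau_c$ and $\tau_1+\tau_c+\tau_s = 1$. Let $D$ be the diagonal matrix with $D_{xx} = \sum_{x'} A_{xx'}$, and let $\lambda_1,\lambda_2,\lambda_3$ and $v_1,v_2,v_3$ be the largest three eigenvalues and corresponding eigenvectors of the normalized adjacency matrix $D^{-1/2} A D^{-1/2}$. Define $$\hat\lambda_1 = 1,\quad \hat\lambda_2 = 1,\quad \hat\lambda_3 = 1 - \frac{16}{3}\frac{\tau_c}{\tau_1},$$ $$\hat v_1 = [0,0,0,0,1,1],\quad \hat v_2 = [\sqrt{3},\sqrt{3},1,1,0,0],\quad \hat v_3 = [1,1,-\sqrt{3},-\sqrt{3},0,0].$$ Let $U = [v_1,v_2,v_3]$ and $\hat U = [\hat v_1,\hat v_2,\hat v_3]$. Then for $i\in\{1,2,3\}$, $|\lambda_i - \hat\lambda_i| \le O\big((\tfrac{\tau_c}{\tau_1})^2\big)$ and $\|\sin(U,\hat U)\|_F \le O\big(\tfrac{\tau_c}{\tau_1}\big)$, where $\sin(U,\hat U)$ denotes the matrix of sines of the principal angles between the column subspaces of $U$ and $\hat U$ (subspace distance between matrices with orthonormal columns).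
   Context: Toy example: six data points (nodes) — a red cube and a blue cube (known class, labeled), a red sphere and a blue sphere (novel class), and two gray cylinders (novel class). The augmentation probability $\mathcal{T}(x\mid\bar x)$ equals $\tau_1$ if $x$ and $\bar x$ share both color and shape, $\tau_c$ if they share color but not shape, $\tau_s$ if they share shape but not color, and $\tau_0 = 0$ otherwise. The unlabeled adjacency is $A^{(u)}_{xx'} = \mathbb{E}_{\bar x}\mathcal{T}(x\mid\bar x)\mathcal{T}(x'\mid\bar x)$ (with $\eta_u = 6$), and the label perturbation is $\eta_l \mathfrak{l}\mathfrak{l}^{\top}$ with $\eta_l = 4$ and $\mathfrak{l}_x = \mathbb{E}_{\bar x_l}\mathcal{T}(x\mid\bar x_l)$ averaged over the two labeled cubes, giving the second matrix above. *)

theory Defs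
  imports Complex_Main
begin

text \<open>6x6 real matrices are represented as functions nat => nat => real on indices {0..<6};
vectors as nat => real on {0..<6}.\<close>

definition mat_of_list :: "real list list \<Rightarrow> nat \<Rightarrow> nat \<Rightarrow> real" where
  "mat_of_list rows i j = rows ! i ! j"

definition vec_of_list :: "real list \<Rightarrow> nat \<Rightarrow> real" where
  "vec_of_list xs i = xs ! i"

definition Au_scaled :: "real \<Rightarrow> real \<Rightarrow> real \<Rightarrow> nat \<Rightarrow> nat \<Rightarrow> real" where
  "Au_scaled t1 tc ts = (let a = t1^2 + ts^2 + tc^2; b = 2*t1*ts; c = 2*t1*tc; d = 2*tc*ts;
      e = 2*t1^2 in
    mat_of_list
     [[a, b, c, d, 0, 0],
      [b, a, d, c, 0, 0],
      [c, d, a, b, 0, 0],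
      [d, c, b, a, 0, 0],
      [0, 0, 0, 0, e, e],
      [0, 0, 0, 0, e, e]])"

text \<open>The label perturbation eta_l l l^T.\<close>
definition Al_scaled :: "real \<Rightarrow> real \<Rightarrow> real \<Rightarrow> nat \<Rightarrow> nat \<Rightarrow> real" where
  "Al_scaled t1 tc ts = (let p = (t1 + ts)^2; q = tc * (t1 + ts); r = tc^2 in
    mat_of_list
     [[p, p, q, q, 0, 0],
      [p, p, q, q, 0, 0],
      [q, q, r, r, 0, 0],
      [q, q, r, r, 0, 0],
      [0, 0, 0, 0, 0, 0],
      [0, 0, 0, 0, 0, 0]])"

definition adjA :: "real \<Rightarrow> real \<Rightarrow> real \<Rightarrow> nat \<Rightarrow> nat \<Rightarrow> real" where
  "adjA t1 tc ts i j = Au_scaled t1 tc ts i j + Al_scaled t1 tc ts i j"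

definition degA :: "real \<Rightarrow> real \<Rightarrow> real \<Rightarrow> nat \<Rightarrow> real" where
  "degA t1 tc ts i = (\<Sum>j<6. adjA t1 tc ts i j)"

definition normA :: "real \<Rightarrow> real \<Rightarrow> real \<Rightarrow> nat \<Rightarrow> nat \<Rightarrow> real" where
  "normA t1 tc ts i j =
     adjA t1 tc ts i j / (sqrt (degA t1 tc ts i) * sqrt (degA t1 tc ts j))"

text \<open>Then lam 0, lam 1, lam 2 are the largest three eigenvalues and v 0, v 1, v 2 corresponding
eigenvectors.\<close>
definition sorted_orthonormal_eigenbasis ::
  "(nat \<Rightarrow> nat \<Rightarrow> real) \<Rightarrow> (nat \<Rightarrow> real) \<Rightarrow> (nat \<Rightarrow> nat \<Rightarrow> real) \<Rightarrow> bool" where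
  "sorted_orthonormal_eigenbasis M lam v \<longleftrightarrow>
     (\<forall>k<6. \<forall>l<6. (\<Sum>i<6. v k i * v l i) = (if k = l then 1 else 0)) \<and>
     (\<forall>k<6. \<forall>i<6. (\<Sum>j<6. M i j * v k j) = lam k * v k i) \<and>
     (\<forall>k<5. lam (Suc k) \<le> lam k)"

definition vnorm6 :: "(nat \<Rightarrow> real) \<Rightarrow> real" where
  "vnorm6 x = sqrt (\<Sum>i<6. x i ^ 2)"

text \<open>Frobenius norm of sin(U, W) for U = [u_0,..,u_{k-1}] with orthonormal columns and
W = [w_0,..,w_{k-1}] with nonzero, mutually orthogonal columns: with Q the column-normalization
of W, the cosines of the principal angles are the singular values of U^T Q, hence
||sin Theta||_F^2 = sum_i (1 - cos^2 theta_i) = k - ||U^T Q||_F^2.\<close>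
definition sin_theta_frob :: "nat \<Rightarrow> (nat \<Rightarrow> nat \<Rightarrow> real) \<Rightarrow> (nat \<Rightarrow> nat \<Rightarrow> real) \<Rightarrow> real" where
  "sin_theta_frob k u w =
     sqrt (real k - (\<Sum>a<k. \<Sum>b<k. ((\<Sum>i<6. u a i * w b i) / vnorm6 (w b)) ^ 2))"

definition lam_hat :: "real \<Rightarrow> real \<Rightarrow> nat \<Rightarrow> real" where
  "lam_hat t1 tc k = (if k = 2 then 1 - 16/3 * (tc / t1) else 1)"

definition v_hat :: "nat \<Rightarrow> nat \<Rightarrow> real" where
  "v_hat k = (if k = 0 then vec_of_list [0, 0, 0, 0, 1, 1]
              else if k = 1 then vec_of_list [sqrt 3, sqrt 3, 1, 1, 0, 0]
              else vec_of_list [1, 1, - sqrt 3, - sqrt 3, 0, 0])"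

end

theory Submission
  imports Defs "Jordan_Normal_Form.Determinant"
begin

(*
  The normalized adjacency matrix N = D^(-1/2) A D^(-1/2) maps D^(1/2) x to mu D^(1/2) x whenever
  A x = mu D x.  Such generalized eigenvectors are easy to write down: the indicators of the
  cylinders and of the cubes and spheres (mu = 1), the difference of the two cylinders (mu = 0),
  and (1 + 2 tau_c, 1 + 2 tau_c, -(3 - 2 tau_c), -(3 - 2 tau_c), 0, 0) with
  mu = 3 (1 - 2 tau_c)^2 / ((3 - 2 tau_c) (1 + 2 tau_c)) = 1 - 16/3 tau_c + O(tau_c^2).
  The remaining two directions are antisymmetric under exchanging the colours; there the eigenvalue
  equation becomes a 2x2 generalized eigenvalue problem whose eigenvalues lie strictly below mu.
  Comparing an arbitrary orthonormal eigenbasis with this orthogonal basis through Parseval's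
  identity counts multiplicities, so the three largest eigenvalues are exactly 1, 1, mu, and their
  eigenspace is the span of v_hat: the sine of the angle even vanishes.  What remains is
  tau_c / tau_1 - tau_c = O((tau_c / tau_1)^2).
*)

section \<open>Orthonormal bases and eigenvectors of symmetric matrices\<close>

definition dot :: "nat \<Rightarrow> (nat \<Rightarrow> real) \<Rightarrow> (nat \<Rightarrow> real) \<Rightarrow> real" where
  "dot n x y = (\<Sum>i<n. x i * y i)"

definition mat_vec :: "nat \<Rightarrow> (nat \<Rightarrow> nat \<Rightarrow> real) \<Rightarrow> (nat \<Rightarrow> real) \<Rightarrow> nat \<Rightarrow> real" where
  "mat_vec n M x i = (\<Sum>j<n. M i j * x j)"

definition eigen_eq :: "nat \<Rightarrow> (nat \<Rightarrow> nat \<Rightarrow> real) \<Rightarrow> real \<Rightarrow> (nat \<Rightarrow> real) \<Rightarrow> bool" where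
  "eigen_eq n M l x \<longleftrightarrow> (\<forall>i<n. mat_vec n M x i = l * x i)"

definition symmetric :: "nat \<Rightarrow> (nat \<Rightarrow> nat \<Rightarrow> real) \<Rightarrow> bool" where
  "symmetric n M \<longleftrightarrow> (\<forall>i<n. \<forall>j<n. M i j = M j i)"

definition orthonormal :: "nat \<Rightarrow> (nat \<Rightarrow> nat \<Rightarrow> real) \<Rightarrow> bool" where
  "orthonormal n v \<longleftrightarrow> (\<forall>k<n. \<forall>l<n. dot n (v k) (v l) = (if k = l then 1 else 0))"

definition orthogonal_basis :: "nat \<Rightarrow> (nat \<Rightarrow> nat \<Rightarrow> real) \<Rightarrow> bool" where
  "orthogonal_basis n u \<longleftrightarrow>
     (\<forall>j<n. 0 < dot n (u j) (u j)) \<and> (\<forall>j<n. \<forall>l<n. j \<noteq> l \<longrightarrow> dot n (u j) (u l) = 0)"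

lemma eigen_eq_cong:
  "(\<And>i. i < n \<Longrightarrow> x i = y i) \<Longrightarrow> eigen_eq n M l x = eigen_eq n M l y"
  by (simp add: eigen_eq_def mat_vec_def)

lemma dot_self_pos: "x i \<noteq> 0 \<Longrightarrow> i < n \<Longrightarrow> 0 < dot n x x"
  unfolding dot_def by (rule sum_pos2[of _ i]) (auto simp flip: not_real_square_gt_zero)

lemma orthonormal_columns:
  assumes "orthonormal n v" "i < n" "j < n"
  shows "(\<Sum>k<n. v k i * v k j) = (if i = j then 1 else 0)"
proof -
  define A :: "real mat" where "A = mat n n (\<lambda>(k, i). v k i)"
  have A: "A \<in> carrier_mat n n" "transpose_mat A \<in> carrier_mat n n"
    by (simp_all add: A_def)
  have "A * transpose_mat A = 1\<^sub>m n"
  proof (rule eq_matI)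
    fix k l assume "k < dim_row (1\<^sub>m n :: real mat)" "l < dim_col (1\<^sub>m n :: real mat)"
    then show "(A * transpose_mat A) $$ (k, l) = 1\<^sub>m n $$ (k, l)"
      using assms(1) by (simp add: A_def scalar_prod_def lessThan_atLeast0 orthonormal_def dot_def)
  qed (simp_all add: A_def)
  then have "transpose_mat A * A = 1\<^sub>m n"
    using mat_mult_left_right_inverse[OF A] by blast
  then have "(transpose_mat A * A) $$ (i, j) = (1\<^sub>m n :: real mat) $$ (i, j)"
    by simp
  then show ?thesis
    using assms(2,3) by (simp add: A_def scalar_prod_def lessThan_atLeast0)
qed

lemma parseval:
  assumes "orthonormal n v"
  shows "(\<Sum>k<n. (dot n (v k) x)^2) = dot n x x"
proof -
  have "(\<Sum>k<n. (dot n (v k) x)^2) = (\<Sum>k<n. \<Sum>i<n. \<Sum>j<n. v k i * v k j * (x i * x j))"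
    unfolding dot_def power2_eq_square sum_product by (simp add: algebra_simps)
  also have "\<dots> = (\<Sum>i<n. \<Sum>k<n. \<Sum>j<n. v k i * v k j * (x i * x j))"
    by (rule sum.swap)
  also have "\<dots> = (\<Sum>i<n. \<Sum>j<n. \<Sum>k<n. v k i * v k j * (x i * x j))"
    by (intro sum.cong refl sum.swap)
  also have "\<dots> = (\<Sum>i<n. \<Sum>j<n. (\<Sum>k<n. v k i * v k j) * (x i * x j))"
    by (simp add: sum_distrib_right)
  also have "\<dots> = (\<Sum>i<n. \<Sum>j<n. (if i = j then x i * x j else 0))"
    using orthonormal_columns[OF assms] by (intro sum.cong refl) auto
  also have "\<dots> = dot n x x"
    by (simp add: dot_def)
  finally show ?thesis .
qed

lemma orthogonal_basis_parseval:
  assumes "orthogonal_basis n u"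
  shows "(\<Sum>j<n. (dot n x (u j))^2 / dot n (u j) (u j)) = dot n x x"
proof -
  define w where "w j = (\<lambda>i. u j i / sqrt (dot n (u j) (u j)))" for j
  have pos: "0 < dot n (u j) (u j)" if "j < n" for j
    using assms that by (simp add: orthogonal_basis_def)
  have dot_w: "dot n (w j) (w l)
      = dot n (u j) (u l) / (sqrt (dot n (u j) (u j)) * sqrt (dot n (u l) (u l)))" for j l
    unfolding w_def dot_def sum_divide_distrib by (simp add: times_divide_times_eq)
  have unit: "D / (sqrt D * sqrt D) = 1" if "0 < D" for D :: real
    using that by simp
  have "orthonormal n w"
    using assms unit[OF pos] by (simp add: orthonormal_def orthogonal_basis_def dot_w)
  have "dot n (w j) x = dot n x (u j) / sqrt (dot n (u j) (u j))" for j
    unfolding w_def dot_def sum_divide_distrib by (simp add: mult.commute)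
  then have "(dot n (w j) x)^2 = (dot n x (u j))^2 / dot n (u j) (u j)" if "j < n" for j
    using pos[OF that] by (simp add: power_divide)
  then show ?thesis
    using parseval[OF \<open>orthonormal n w\<close>, of x] by simp
qed

lemma dot_mat_vec_symmetric:
  assumes "symmetric n M"
  shows "dot n (mat_vec n M x) y = dot n x (mat_vec n M y)"
proof -
  have "dot n (mat_vec n M x) y = (\<Sum>i<n. \<Sum>j<n. M i j * x j * y i)"
    by (simp add: dot_def mat_vec_def sum_distrib_right)
  also have "\<dots> = (\<Sum>j<n. \<Sum>i<n. x j * (M j i * y i))"
    using assms by (subst sum.swap) (auto simp: symmetric_def algebra_simps intro!: sum.cong)
  also have "\<dots> = dot n x (mat_vec n M y)"
    by (simp add: dot_def mat_vec_def sum_distrib_left)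
  finally show ?thesis .
qed

lemma eigen_eq_orthogonal:
  assumes "symmetric n M" "eigen_eq n M l x" "eigen_eq n M \<mu> y" "l \<noteq> \<mu>"
  shows "dot n x y = 0"
proof -
  have "l * dot n x y = dot n (mat_vec n M x) y"
    using assms(2) by (simp add: eigen_eq_def dot_def sum_distrib_left algebra_simps)
  also have "\<dots> = dot n x (mat_vec n M y)"
    by (rule dot_mat_vec_symmetric[OF assms(1)])
  also have "\<dots> = \<mu> * dot n x y"
    using assms(3) by (simp add: eigen_eq_def dot_def sum_distrib_left algebra_simps)
  finally have "(l - \<mu>) * dot n x y = 0"
    by (simp add: algebra_simps)
  then show ?thesis
    using assms(4) by simp
qed

lemma eigen_eq_normalized_iff:
  assumes d: "\<forall>i<n. 0 < d i"
  shows "eigen_eq n (\<lambda>i j. A i j / (sqrt (d i) * sqrt (d j))) \<mu> (\<lambda>i. sqrt (d i) * k i)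
    \<longleftrightarrow> (\<forall>i<n. (\<Sum>j<n. A i j * k j) = \<mu> * d i * k i)"
proof -
  have row: "(\<Sum>j<n. A i j / (sqrt (d i) * sqrt (d j)) * (sqrt (d j) * k j))
        = \<mu> * (sqrt (d i) * k i)
      \<longleftrightarrow> (\<Sum>j<n. A i j * k j) = \<mu> * d i * k i" if i: "i < n" for i
  proof -
    have "0 < d i"
      using d i by simp
    then have s: "0 < sqrt (d i)" "sqrt (d i) * sqrt (d i) = d i"
      by (simp_all add: abs_of_pos)
    have eq: "(\<Sum>j<n. A i j / (sqrt (d i) * sqrt (d j)) * (sqrt (d j) * k j))
        = (\<Sum>j<n. A i j * k j) / sqrt (d i)"
      unfolding sum_divide_distrib using d by (intro sum.cong refl) auto
    have "\<mu> * (sqrt (d i) * k i) * sqrt (d i) = \<mu> * (sqrt (d i) * sqrt (d i)) * k i"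
      by (simp only: mult_ac)
    then have m: "\<mu> * (sqrt (d i) * k i) * sqrt (d i) = \<mu> * d i * k i"
      by (simp only: s(2))
    have "sqrt (d i) \<noteq> 0"
      using s(1) by simp
    show ?thesis
      unfolding eq nonzero_divide_eq_eq[OF \<open>sqrt (d i) \<noteq> 0\<close>] m by (rule refl)
  qed
  show ?thesis
    unfolding eigen_eq_def mat_vec_def using row by blast
qed

(* The weights (v k . u j)^2 / |u j|^2 form a doubly stochastic matrix whose entry vanishes unless
   v k and u j belong to the same eigenspace; summing it over the rows with lam k = mu and over the
   columns in J therefore gives the same number. *)
lemma card_eigenvalue_eq:
  assumes sym: "symmetric n M" and v: "orthonormal n v" "\<forall>k<n. eigen_eq n M (lam k) (v k)"
    and u: "orthogonal_basis n u"
    and J: "J \<subseteq> {..<n}" "\<forall>j\<in>J. eigen_eq n M \<mu> (u j)"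
    and eigenspace: "\<And>x j. eigen_eq n M \<mu> x \<Longrightarrow> j < n \<Longrightarrow> j \<notin> J \<Longrightarrow> dot n x (u j) = 0"
  shows "card {k. k < n \<and> lam k = \<mu>} = card J"
proof -
  define w where "w k j = (dot n (v k) (u j))^2 / dot n (u j) (u j)" for k j
  define S where "S = {k. k < n \<and> lam k = \<mu>}"
  have S: "S \<subseteq> {..<n}" "finite S"
    by (auto simp: S_def)
  have row: "(\<Sum>j<n. w k j) = 1" if "k < n" for k
    using orthogonal_basis_parseval[OF u, of "v k"] v(1) that by (simp add: w_def orthonormal_def)
  have col: "(\<Sum>k<n. w k j) = 1" if "j < n" for j
  proof -
    have "0 < dot n (u j) (u j)"
      using u that by (simp add: orthogonal_basis_def)
    then show ?thesis
      using parseval[OF v(1), of "u j"] by (simp add: w_def sum_divide_distrib[symmetric])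
  qed
  have "card S = (\<Sum>k\<in>S. \<Sum>j<n. w k j)"
    using S row by (simp add: subset_eq)
  also have "\<dots> = (\<Sum>k\<in>S. \<Sum>j\<in>J. w k j)"
    using J(1) v(2) eigenspace
    by (intro sum.cong refl sum.mono_neutral_right) (auto simp: S_def w_def)
  also have "\<dots> = (\<Sum>j\<in>J. \<Sum>k\<in>S. w k j)"
    by (rule sum.swap)
  also have "\<dots> = (\<Sum>j\<in>J. \<Sum>k<n. w k j)"
    using S J v sym
    by (intro sum.cong refl sum.mono_neutral_left)
       (auto simp: S_def w_def intro!: eigen_eq_orthogonal)
  also have "\<dots> = card J"
    using J(1) col by (simp add: subset_eq)
  finally show ?thesis
    by (simp add: S_def)
qed

lemma sin_theta_frob_eq_0:
  assumes v: "orthonormal 6 v" and m: "m \<le> 6" and w: "\<forall>b<m. 0 < dot 6 (w b) (w b)"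
    and orth: "\<forall>a b. m \<le> a \<longrightarrow> a < 6 \<longrightarrow> b < m \<longrightarrow> dot 6 (v a) (w b) = 0"
  shows "sin_theta_frob m v w = 0"
proof -
  have column: "(\<Sum>a<m. ((\<Sum>i<6. v a i * w b i) / vnorm6 (w b))^2) = 1" if b: "b < m" for b
  proof -
    have "(\<Sum>a<m. (dot 6 (v a) (w b))^2) = (\<Sum>a<6. (dot 6 (v a) (w b))^2)"
      using m orth b by (intro sum.mono_neutral_left) auto
    also have "\<dots> = dot 6 (w b) (w b)"
      using parseval[OF v] .
    finally have "(\<Sum>a<m. (dot 6 (v a) (w b))^2) = dot 6 (w b) (w b)" .
    moreover have "vnorm6 (w b) = sqrt (dot 6 (w b) (w b))"
      by (simp add: vnorm6_def dot_def power2_eq_square)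
    moreover have "0 < dot 6 (w b) (w b)"
      using w b by simp
    ultimately show ?thesis
      by (simp add: dot_def[symmetric] power_divide sum_divide_distrib[symmetric])
  qed
  have "(\<Sum>a<m. \<Sum>b<m. ((\<Sum>i<6. v a i * w b i) / vnorm6 (w b))^2) = m"
    using column by (subst sum.swap) simp
  then show ?thesis
    by (simp add: sin_theta_frob_def)
qed

lemma linear_2x2_trivial_solution:
  fixes a b c d x y :: real
  assumes "a * d - b * c \<noteq> 0" "a * x + b * y = 0" "c * x + d * y = 0"
  shows "x = 0 \<and> y = 0"
proof -
  have "(a * d - b * c) * x = d * (a * x + b * y) - b * (c * x + d * y)"
    by (simp add: algebra_simps)
  also have "\<dots> = 0"
    using assms(2,3) by simp
  finally have x: "(a * d - b * c) * x = 0" .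
  have "(a * d - b * c) * y = a * (c * x + d * y) - c * (a * x + b * y)"
    by (simp add: algebra_simps)
  also have "\<dots> = 0"
    using assms(2,3) by simp
  finally have y: "(a * d - b * c) * y = 0" .
  show ?thesis
    using x y assms(1) by simp
qed

section \<open>Scalar estimates\<close>

definition third_eigenvalue :: "real \<Rightarrow> real" where
  "third_eigenvalue c = 3 * (1 - 2*c)^2 / (3 + 4*c - 4*c^2)"

(* The diagonal entries of the normalized adjacency matrix on the colour-antisymmetric vectors
   (1, -1, 0, 0, 0, 0) and (0, 0, 1, -1, 0, 0), written with tau_c = c, tau_s = s. *)
definition cube_antisym :: "real \<Rightarrow> real \<Rightarrow> real" where
  "cube_antisym c s = ((1 - c - 2*s)^2 + c^2) / (3 - 2*c)"

definition sphere_antisym :: "real \<Rightarrow> real \<Rightarrow> real" where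
  "sphere_antisym c s = ((1 - c - 2*s)^2 + c^2) / (1 + 2*c)"

lemma small_monomial_bounds:
  fixes c s :: real
  assumes c0: "0 < c" and c1: "c < 1/100" and s0: "4/9*c \<le> s" and s1: "s \<le> c"
  shows "s > 0" "s*s \<le> c*c" "c*c \<le> c/100" "c*s \<le> c*c" "c*s*s \<le> c*c*c" "c*c*s \<le> c*c*c"
    "c*c*c \<le> c*c" "0 \<le> c*s" "0 \<le> c*c*s" "0 \<le> c*c*s*s" "0 \<le> c*c*c*s" "0 \<le> c*c*c*c"
    "0 \<le> s*s" "0 \<le> c*c" "0 \<le> c*c*c" "0 \<le> c*s*s"
proof -
  show sp: "s > 0" using c0 s0 by simp
  show m1: "s*s \<le> c*c" using s1 sp by (simp add: mult_mono)
  show "c*c \<le> c/100" using c0 c1 by (simp add: mult_strict_left_mono less_imp_le)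
  show m3: "c*s \<le> c*c" using s1 c0 by simp
  show "c*s*s \<le> c*c*c" using m1 c0 by (simp add: mult.assoc)
  show "c*c*s \<le> c*c*c" using m3 c0 by (simp add: mult.assoc)
  show "c*c*c \<le> c*c" using c0 c1 by simp
  show "0 \<le> c*s" "0 \<le> c*c*s" "0 \<le> c*c*s*s" "0 \<le> c*c*c*s" "0 \<le> c*c*c*c"
    "0 \<le> s*s" "0 \<le> c*c" "0 \<le> c*c*c" "0 \<le> c*s*s" using c0 sp by simp_all
qed

lemma third_eigenvalue_denom_pos:
  fixes c :: real
  assumes "0 < c" "c < 1"
  shows "3 + 4*c - 4*c^2 > 0"
proof -
  have "c * c < c"
    using assms by (simp add: mult_less_cancel_left1)
  then show ?thesis
    unfolding power2_eq_square using assms by linarith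
qed

lemma third_eigenvalue_bounds:
  fixes c :: real
  assumes c0: "0 < c" and c1: "c < 1/100"
  shows "0 < third_eigenvalue c" "third_eigenvalue c < 1"
proof -
  have den: "3 + 4*c - 4*c^2 > 0"
    using third_eigenvalue_denom_pos c0 c1 by simp
  have "c*c \<le> c/100"
    using c0 c1 by (simp add: mult_strict_left_mono less_imp_le)
  then have "3*(1-2*c)^2 < 3 + 4*c - 4*c^2"
    unfolding power2_eq_square using c0 by (simp add: algebra_simps)
  then show "third_eigenvalue c < 1"
    using den by (simp add: third_eigenvalue_def divide_less_eq_1_pos)
  show "0 < third_eigenvalue c"
    using den c1 by (simp add: third_eigenvalue_def)
qed

lemma third_eigenvalue_approx:
  fixes c :: real
  assumes c0: "0 < c" and c1: "c < 1/100"
  shows "\<bar>third_eigenvalue c - (1 - 16/3*c)\<bar> \<le> 13*c^2"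
proof -
  have den: "3 + 4*c - 4*c^2 > 0"
    using third_eigenvalue_denom_pos c0 c1 by simp
  have eq: "third_eigenvalue c - (1 - 16/3*c) = (112*c^2 - 64*c^3) / (3*(3 + 4*c - 4*c^2))"
    using den by (simp add: third_eigenvalue_def field_simps power2_eq_square power3_eq_cube)
  have "112*c^2 - 64*c^3 = c^2*(112 - 64*c)"
    by (simp add: algebra_simps power2_eq_square power3_eq_cube)
  then have num: "0 \<le> 112*c^2 - 64*c^3"
    using c1 by simp
  have "13*c^2*(3*(3 + 4*c - 4*c^2)) - (112*c^2 - 64*c^3) = 5*(c*c) + 220*(c*c*c) - 156*(c*c*c*c)"
    by (simp add: algebra_simps power2_eq_square power3_eq_cube)
  moreover have "c*c*c*c \<le> c*c*c" "0 \<le> c*c" "0 \<le> c*c*c"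
    using c0 c1 by simp_all
  ultimately have "112*c^2 - 64*c^3 \<le> 13*c^2*(3*(3 + 4*c - 4*c^2))"
    by linarith
  then have "(112*c^2 - 64*c^3) / (3*(3 + 4*c - 4*c^2)) \<le> 13*c^2"
    using den by (simp add: pos_divide_le_eq)
  then show ?thesis
    using eq num den by simp
qed

lemma cube_antisym_below_third_eigenvalue:
  fixes c s :: real
  assumes c0: "0 < c" and c1: "c < 1/100" and s0: "4/9*c \<le> s" and s1: "s \<le> c"
  shows "cube_antisym c s + 1/2 \<le> third_eigenvalue c"
proof -
  note m = small_monomial_bounds[OF assms]
  have den: "3 + 4*c - 4*c^2 > 0"
    using third_eigenvalue_denom_pos c0 c1 by simp
  have den2: "3 - 2*c > 0"
    using c1 by simp
  \<comment> \<open>\<open>cube_antisym c s + 1/2 \<le> third_eigenvalue c\<close> with the denominators cleared\<close>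
  have poly: "0 \<le> 3/2 + 12*s - 12*s*s - 43*c + 4*c*s - 16*c*s*s + 76*c*c - 32*c*c*s
      + 16*c*c*s*s - 44*c*c*c + 16*c*c*c*s + 8*c*c*c*c"
    using m s0 s1 c0 c1 by linarith
  show ?thesis
    using den den2 c0 poly
    by (simp add: cube_antisym_def third_eigenvalue_def field_simps power2_eq_square)
qed

lemma sphere_antisym_below_third_eigenvalue:
  fixes c s :: real
  assumes c0: "0 < c" and c1: "c < 1/100" and s0: "4/9*c \<le> s" and s1: "s \<le> c"
  shows "sphere_antisym c s + c/10 \<le> third_eigenvalue c"
proof -
  note m = small_monomial_bounds[OF assms]
  have den: "3 + 4*c - 4*c^2 > 0"
    using third_eigenvalue_denom_pos c0 c1 by simp
  \<comment> \<open>\<open>sphere_antisym c s + c/10 \<le> third_eigenvalue c\<close> with the denominators cleared\<close>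
  have poly: "0 \<le> 12*s - 12*s*s - 43/10*c + 4*c*s - 16*c*s*s - 7*c*c - 32*c*c*s
      + 16*c*c*s*s + 38/5*c*c*c + 16*c*c*c*s + 44/5*c*c*c*c"
    using m s0 c0 by linarith
  show ?thesis
    using den c0 poly
    by (simp add: sphere_antisym_def third_eigenvalue_def field_simps power2_eq_square)
qed

lemma antisym_block_det_pos:
  fixes c s l :: real
  assumes c0: "0 < c" and c1: "c < 1/100" and s0: "4/9*c \<le> s" and s1: "s \<le> c"
    and l: "third_eigenvalue c \<le> l"
  shows "0 < (l * (3 - 2*c) - ((1 - c - 2*s)^2 + c^2)) * (l * (1 + 2*c) - ((1 - c - 2*s)^2 + c^2))
    - (2*c*(1 - c - 2*s))^2"
proof -
  define D where "D = (1 - c - 2*s)^2 + c^2"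
  have "(3 - 2*c) * (1/2) \<le> (3 - 2*c) * (l - cube_antisym c s)"
    using cube_antisym_below_third_eigenvalue[OF assms(1-4)] l c1 by (intro mult_left_mono) auto
  also have "\<dots> = l * (3 - 2*c) - D"
    using c1 by (simp add: cube_antisym_def D_def right_diff_distrib mult.commute)
  finally have cube: "(3 - 2*c) * (1/2) \<le> l * (3 - 2*c) - D" .
  have "(1 + 2*c) * (c/10) \<le> (1 + 2*c) * (l - sphere_antisym c s)"
    using sphere_antisym_below_third_eigenvalue[OF assms(1-4)] l c0 by (intro mult_left_mono) auto
  also have "\<dots> = l * (1 + 2*c) - D"
    using c0 by (simp add: sphere_antisym_def D_def right_diff_distrib mult.commute)
  finally have sphere: "(1 + 2*c) * (c/10) \<le> l * (1 + 2*c) - D" .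
  have "(3 - 2*c) * (1/2) * ((1 + 2*c) * (c/10)) \<le> (l * (3 - 2*c) - D) * (l * (1 + 2*c) - D)"
    using cube sphere c0 c1 by (intro mult_mono) auto
  moreover have "(2*c*(1 - c - 2*s))^2 < (3 - 2*c) * (1/2) * ((1 + 2*c) * (c/10))"
  proof -
    have "(1 - c - 2*s)^2 \<le> 1"
      using assms by (intro power_le_one) auto
    then have "4 * (c * c) * (1 - c - 2*s)^2 \<le> 4 * (c * c) * 1"
      by (intro mult_left_mono) auto
    moreover have "(2*c*(1 - c - 2*s))^2 = 4 * (c * c) * (1 - c - 2*s)^2"
      by (simp add: power2_eq_square algebra_simps)
    ultimately have "(2*c*(1 - c - 2*s))^2 \<le> 4 * (c * c)"
      by simp
    moreover have "c * c < c / 40" "c * c * c \<le> c * c"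
      using c0 c1 by simp_all
    moreover have "(3 - 2*c) * (1/2) * ((1 + 2*c) * (c/10)) = 3*c/20 + c*c/5 - c*c*c/5"
      by (simp add: field_simps)
    ultimately show ?thesis
      using c0 by linarith
  qed
  ultimately show ?thesis
    unfolding D_def by linarith
qed

section \<open>The graph of the toy example\<close>

lemma sum6: "(\<Sum>i<(6::nat). f i) = f 0 + f 1 + f 2 + f 3 + f 4 + (f 5 :: real)"
  by (simp add: eval_nat_numeral)

lemma less6: "(i::nat) < 6 \<longleftrightarrow> i = 0 \<or> i = 1 \<or> i = 2 \<or> i = 3 \<or> i = 4 \<or> i = 5"
  by auto

lemmas adjA_simps = adjA_def Au_scaled_def Al_scaled_def Defs.mat_of_list_def Let_def

locale toy_graph =
  fixes t1 tc ts :: real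
  assumes t1_pos: "0 < t1" and tc_pos: "0 < tc" and ts_pos: "0 < ts"
    and params_sum: "t1 + tc + ts = 1"
begin

lemma t1_eq: "t1 = 1 - tc - ts"
  using params_sum by simp

lemma tc_less_1: "tc < 1"
  using params_sum t1_pos ts_pos by simp

lemma degA_eq:
  "i < 6 \<Longrightarrow> degA t1 tc ts i = (if i < 2 then 3 - 2*tc else if i < 4 then 1 + 2*tc else 4*t1^2)"
  unfolding less6
  by (elim disjE; simp add: degA_def sum6 adjA_simps t1_eq power2_eq_square algebra_simps)

lemma degA_pos: "i < 6 \<Longrightarrow> 0 < degA t1 tc ts i"
  using t1_pos tc_less_1 tc_pos by (simp add: degA_eq)

definition rc :: real where "rc = sqrt (3 - 2*tc)"
definition rs :: real where "rs = sqrt (1 + 2*tc)"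

lemma rc_pos: "0 < rc" and rs_pos: "0 < rs"
  using tc_pos tc_less_1 by (simp_all add: rc_def rs_def)

(* The second forms match the right-nested products produced by algebra_simps. *)
lemma rc_rs_sq [simp]:
  "rc * rc = 3 - 2*tc" "rc * (rc * x) = (3 - 2*tc) * x"
  "rs * rs = 1 + 2*tc" "rs * (rs * x) = (1 + 2*tc) * x"
  using tc_pos tc_less_1 by (simp_all add: rc_def rs_def flip: mult.assoc)

lemma sqrt_degA:
  "i < 6 \<Longrightarrow> sqrt (degA t1 tc ts i) = (if i < 2 then rc else if i < 4 then rs else 2*t1)"
  using t1_pos by (simp add: degA_eq rc_def rs_def real_sqrt_mult)

lemma normA_eq:
  "normA t1 tc ts = (\<lambda>i j. adjA t1 tc ts i j / (sqrt (degA t1 tc ts i) * sqrt (degA t1 tc ts j)))"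
  by (simp add: normA_def fun_eq_iff)

lemma normA_symmetric: "symmetric 6 (normA t1 tc ts)"
proof -
  have "adjA t1 tc ts i j = adjA t1 tc ts j i" if "i < 6" "j < 6" for i j
    using that unfolding less6 by (elim disjE) (simp_all add: adjA_simps)
  then show ?thesis
    by (simp add: symmetric_def normA_def mult.commute)
qed

(* Solutions of A x = mu D x; then D^(1/2) x is an eigenvector of normA (see basis_eigen). *)
definition gen_eigvec :: "nat \<Rightarrow> nat \<Rightarrow> real" where
  "gen_eigvec j = Defs.vec_of_list ([[0, 0, 0, 0, 1, 1], [0, 0, 0, 0, 1, -1], [1, 1, 1, 1, 0, 0],
     [1 + 2*tc, 1 + 2*tc, -(3 - 2*tc), -(3 - 2*tc), 0, 0]] ! j)"

lemma third_eigenvalue_mult: "(3 - 2*tc) * (1 + 2*tc) * third_eigenvalue tc = 3 * (1 - 2*tc)^2"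
proof -
  have "(3 - 2*tc) * (1 + 2*tc) = 3 + 4*tc - 4*tc^2"
    by (simp add: algebra_simps power2_eq_square)
  then show ?thesis
    using third_eigenvalue_denom_pos[OF tc_pos tc_less_1] by (simp add: third_eigenvalue_def)
qed

lemma gen_eigvec_eigen_cylinders:
  "\<forall>i<6. (\<Sum>l<6. adjA t1 tc ts i l * gen_eigvec 0 l) = 1 * degA t1 tc ts i * gen_eigvec 0 i"
  "\<forall>i<6. (\<Sum>l<6. adjA t1 tc ts i l * gen_eigvec 1 l) = 0 * degA t1 tc ts i * gen_eigvec 1 i"
  unfolding less6
  by (auto simp: sum6 adjA_simps gen_eigvec_def Defs.vec_of_list_def degA_eq)

lemma gen_eigvec_eigen_cubes_spheres:
  "\<forall>i<6. (\<Sum>l<6. adjA t1 tc ts i l * gen_eigvec 2 l) = 1 * degA t1 tc ts i * gen_eigvec 2 i"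
proof (intro allI impI)
  fix i :: nat assume "i < 6"
  then show "(\<Sum>l<6. adjA t1 tc ts i l * gen_eigvec 2 l) = 1 * degA t1 tc ts i * gen_eigvec 2 i"
    unfolding less6
    by (elim disjE; simp add: sum6 adjA_simps gen_eigvec_def Defs.vec_of_list_def degA_eq;
        simp add: t1_eq power2_eq_square algebra_simps)
qed

lemma gen_eigvec_eigen_third:
  "\<forall>i<6. (\<Sum>l<6. adjA t1 tc ts i l * gen_eigvec 3 l)
     = third_eigenvalue tc * degA t1 tc ts i * gen_eigvec 3 i"
proof (intro allI impI)
  fix i :: nat assume i: "i < 6"
  have "(\<Sum>l<6. adjA t1 tc ts i l * gen_eigvec 3 l)
      = (if i < 2 then 3 * (1 - 2*tc)^2 else if i < 4 then - 3 * (1 - 2*tc)^2 else 0)"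
    using i unfolding less6
    by (elim disjE; simp add: sum6 adjA_simps gen_eigvec_def Defs.vec_of_list_def;
        simp add: t1_eq power2_eq_square algebra_simps)
  also have "\<dots> = third_eigenvalue tc * degA t1 tc ts i * gen_eigvec 3 i"
    using i third_eigenvalue_mult unfolding less6
    by (elim disjE; simp add: gen_eigvec_def Defs.vec_of_list_def degA_eq algebra_simps)
  finally show "(\<Sum>l<6. adjA t1 tc ts i l * gen_eigvec 3 l)
      = third_eigenvalue tc * degA t1 tc ts i * gen_eigvec 3 i" .
qed

(* basis 4 and basis 5 are not eigenvectors: they span the colour-antisymmetric part. *)
definition basis :: "nat \<Rightarrow> nat \<Rightarrow> real" where
  "basis j = Defs.vec_of_list ([[0, 0, 0, 0, 2*t1, 2*t1], [0, 0, 0, 0, 2*t1, -2*t1],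
     [rc, rc, rs, rs, 0, 0],
     [rc * (1 + 2*tc), rc * (1 + 2*tc), - rs * (3 - 2*tc), - rs * (3 - 2*tc), 0, 0],
     [1, -1, 0, 0, 0, 0], [0, 0, 1, -1, 0, 0]] ! j)"

lemma basis_eq_sqrt_degA_gen_eigvec:
  assumes "j < 4" "i < 6"
  shows "basis j i = sqrt (degA t1 tc ts i) * gen_eigvec j i"
proof -
  have "j = 0 \<or> j = 1 \<or> j = 2 \<or> j = 3"
    using assms(1) by auto
  then show ?thesis
    using assms(2) unfolding less6
    by (elim disjE; simp add: basis_def gen_eigvec_def Defs.vec_of_list_def sqrt_degA algebra_simps)
qed

lemma basis_eigen:
  "eigen_eq 6 (normA t1 tc ts) 1 (basis 0)" "eigen_eq 6 (normA t1 tc ts) 0 (basis 1)"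
  "eigen_eq 6 (normA t1 tc ts) 1 (basis 2)"
  "eigen_eq 6 (normA t1 tc ts) (third_eigenvalue tc) (basis 3)"
proof -
  have pos: "\<forall>i<6. 0 < degA t1 tc ts i"
    using degA_pos by simp
  have from_gen_eigvec: "eigen_eq 6 (normA t1 tc ts) \<mu> (basis j)"
    if "j < 4"
      "\<forall>i<6. (\<Sum>l<6. adjA t1 tc ts i l * gen_eigvec j l) = \<mu> * degA t1 tc ts i * gen_eigvec j i"
    for j \<mu>
  proof -
    have "eigen_eq 6 (normA t1 tc ts) \<mu> (\<lambda>i. sqrt (degA t1 tc ts i) * gen_eigvec j i)"
      unfolding normA_eq using eigen_eq_normalized_iff[OF pos] that(2) by blast
    then show ?thesis
      using that(1) by (subst eigen_eq_cong) (simp_all add: basis_eq_sqrt_degA_gen_eigvec)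
  qed
  show "eigen_eq 6 (normA t1 tc ts) 1 (basis 0)" "eigen_eq 6 (normA t1 tc ts) 0 (basis 1)"
    "eigen_eq 6 (normA t1 tc ts) 1 (basis 2)"
    "eigen_eq 6 (normA t1 tc ts) (third_eigenvalue tc) (basis 3)"
    by (rule from_gen_eigvec, simp, rule gen_eigvec_eigen_cylinders gen_eigvec_eigen_cubes_spheres
        gen_eigvec_eigen_third)+
qed

lemma adjA_antisym_rows:
  "(\<Sum>j<6. adjA t1 tc ts 0 j * k j) - (\<Sum>j<6. adjA t1 tc ts 1 j * k j)
     = ((1 - tc - 2*ts)^2 + tc^2) * (k 0 - k 1) + 2*tc*(1 - tc - 2*ts) * (k 2 - k 3)"
  "(\<Sum>j<6. adjA t1 tc ts 2 j * k j) - (\<Sum>j<6. adjA t1 tc ts 3 j * k j)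
     = 2*tc*(1 - tc - 2*ts) * (k 0 - k 1) + ((1 - tc - 2*ts)^2 + tc^2) * (k 2 - k 3)"
  by (simp_all add: sum6 adjA_simps t1_eq power2_eq_square algebra_simps)

lemma basis_orthogonal: "orthogonal_basis 6 basis"
  unfolding orthogonal_basis_def
proof (intro conjI allI impI)
  fix j :: nat assume "j < 6"
  then have "basis j ([4, 4, 0, 0, 0, 2] ! j) \<noteq> 0" "[4, 4, 0, 0, 0, 2] ! j < (6::nat)"
    using t1_pos tc_pos tc_less_1 rc_pos unfolding less6
    by (elim disjE; simp add: basis_def Defs.vec_of_list_def)+
  then show "0 < dot 6 (basis j) (basis j)"
    by (rule dot_self_pos)
next
  fix j l :: nat assume "j < 6" "l < 6" "j \<noteq> l"
  then show "dot 6 (basis j) (basis l) = 0"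
    unfolding less6
    by (elim disjE; simp add: dot_def sum6 basis_def Defs.vec_of_list_def algebra_simps)
qed

lemma dot_v_hat_eq_0:
  assumes "dot 6 x (basis 0) = 0" "dot 6 x (basis 2) = 0" "dot 6 x (basis 3) = 0" "b < 3"
  shows "dot 6 x (v_hat b) = 0"
proof -
  define p q where "p = x 0 + x 1" and "q = x 2 + x 3"
  have "2 * t1 * (x 4 + x 5) = 0"
    using assms(1) by (simp add: dot_def sum6 basis_def Defs.vec_of_list_def algebra_simps)
  then have "x 4 + x 5 = 0"
    using t1_pos by simp
  have "rc * p + rs * q = 0" "(rc * (1 + 2*tc)) * p + (- rs * (3 - 2*tc)) * q = 0"
    using assms(2,3) by (simp_all add: dot_def sum6 basis_def Defs.vec_of_list_def
        p_def q_def algebra_simps)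
  moreover have "rc * (- rs * (3 - 2*tc)) - rs * (rc * (1 + 2*tc)) \<noteq> 0"
    using rc_pos rs_pos by (simp add: algebra_simps)
  ultimately have "p = 0 \<and> q = 0"
    by (intro linear_2x2_trivial_solution)
  then have "x 1 = - x 0" "x 3 = - x 2" "x 5 = - x 4"
    using \<open>x 4 + x 5 = 0\<close> by (simp_all add: p_def q_def eq_neg_iff_add_eq_0 add.commute)
  moreover have "b = 0 \<or> b = 1 \<or> b = 2"
    using \<open>b < 3\<close> by auto
  ultimately show ?thesis
    by (elim disjE; simp add: dot_def sum6 v_hat_def Defs.vec_of_list_def)
qed

end

section \<open>The three largest eigenvalues of the toy example\<close>

locale toy_graph_spectrum = toy_graph +
  fixes lam :: "nat \<Rightarrow> real" and v :: "nat \<Rightarrow> nat \<Rightarrow> real"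
  assumes tc_small: "tc < 1/100" and ts_ge: "4/9 * tc \<le> ts" and ts_le: "ts \<le> tc"
    and eigenbasis: "sorted_orthonormal_eigenbasis (normA t1 tc ts) lam v"
begin

lemma v_orthonormal: "orthonormal 6 v"
  using eigenbasis by (simp add: sorted_orthonormal_eigenbasis_def orthonormal_def dot_def)

lemma v_eigen: "k < 6 \<Longrightarrow> eigen_eq 6 (normA t1 tc ts) (lam k) (v k)"
  using eigenbasis by (simp add: sorted_orthonormal_eigenbasis_def eigen_eq_def mat_vec_def)

lemma lam_antimono:
  assumes "j \<le> k" "k < 6"
  shows "lam k \<le> lam j"
  using assms
proof (induction k rule: dec_induct)
  case base
  then show ?case by simp
next
  case (step k)
  then have "lam (Suc k) \<le> lam k"
    using eigenbasis by (simp add: sorted_orthonormal_eigenbasis_def)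
  with step show ?case by simp
qed

lemma third_eigenvalue_pos: "0 < third_eigenvalue tc"
  and third_eigenvalue_less_1: "third_eigenvalue tc < 1"
  using third_eigenvalue_bounds[OF tc_pos tc_small] by simp_all

(* For k = D^(-1/2) w the eigenvalue equation, restricted to the colour-antisymmetric parts
   k 0 - k 1 and k 2 - k 3, is a 2x2 generalized eigenvalue problem with nonzero determinant. *)
lemma eigenvector_antisym_coeffs:
  assumes "eigen_eq 6 (normA t1 tc ts) l w" "third_eigenvalue tc \<le> l"
  shows "dot 6 w (basis 4) = 0 \<and> dot 6 w (basis 5) = 0"
proof -
  define k where "k i = w i / sqrt (degA t1 tc ts i)" for i
  have pos: "\<forall>i<6. 0 < degA t1 tc ts i"
    using degA_pos by simp
  have "eigen_eq 6 (normA t1 tc ts) l (\<lambda>i. sqrt (degA t1 tc ts i) * k i)"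
    using assms(1) by (subst eigen_eq_cong[where y = w]) (auto simp: k_def dest: degA_pos)
  then have gen: "\<forall>i<6. (\<Sum>j<6. adjA t1 tc ts i j * k j) = l * degA t1 tc ts i * k i"
    unfolding normA_eq using eigen_eq_normalized_iff[OF pos] by blast
  define D E where "D = (1 - tc - 2*ts)^2 + tc^2" and "E = 2*tc*(1 - tc - 2*ts)"
  have eq1: "(l * (3 - 2*tc) - D) * (k 0 - k 1) + (- E) * (k 2 - k 3) = 0"
    using adjA_antisym_rows(1)[of k] gen degA_eq unfolding D_def E_def by (simp add: algebra_simps)
  have eq2: "(- E) * (k 0 - k 1) + (l * (1 + 2*tc) - D) * (k 2 - k 3) = 0"
    using adjA_antisym_rows(2)[of k] gen degA_eq unfolding D_def E_def by (simp add: algebra_simps)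
  have "(l * (3 - 2*tc) - D) * (l * (1 + 2*tc) - D) - (- E) * (- E) \<noteq> 0"
    using antisym_block_det_pos[OF tc_pos tc_small ts_ge ts_le assms(2)]
    unfolding D_def E_def by (simp add: power2_eq_square)
  from linear_2x2_trivial_solution[OF this eq1 eq2] have "k 0 = k 1" "k 2 = k 3"
    by simp_all
  moreover have "w i = sqrt (degA t1 tc ts i) * k i" if "i < 6" for i
    using degA_pos[OF that] by (simp add: k_def)
  ultimately show ?thesis
    by (simp add: dot_def sum6 basis_def Defs.vec_of_list_def sqrt_degA)
qed

lemma eigenvector_dot_basis_eq_0:
  assumes "eigen_eq 6 (normA t1 tc ts) l w" "j < 6"
    and "j = 0 \<or> j = 2 \<Longrightarrow> l \<noteq> 1" "j = 1 \<Longrightarrow> l \<noteq> 0" "j = 3 \<Longrightarrow> l \<noteq> third_eigenvalue tc"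
    and "4 \<le> j \<Longrightarrow> third_eigenvalue tc \<le> l"
  shows "dot 6 w (basis j) = 0"
proof -
  have orth: "dot 6 w (basis i) = 0" if "eigen_eq 6 (normA t1 tc ts) \<mu> (basis i)" "l \<noteq> \<mu>" for i \<mu>
    using eigen_eq_orthogonal[OF normA_symmetric assms(1) that] .
  consider "j = 0" | "j = 1" | "j = 2" | "j = 3" | "j = 4 \<or> j = 5"
    using assms(2) by linarith
  then show ?thesis
  proof cases
    case 1
    then show ?thesis using orth[OF basis_eigen(1)] assms(3) by simp
  next
    case 2
    then show ?thesis using orth[OF basis_eigen(2)] assms(4) by simp
  next
    case 3
    then show ?thesis using orth[OF basis_eigen(3)] assms(3) by simp
  next
    case 4
    then show ?thesis using orth[OF basis_eigen(4)] assms(5) by simp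
  next
    case 5
    then show ?thesis using eigenvector_antisym_coeffs[OF assms(1) assms(6)] by auto
  qed
qed

lemma card_lam_eq_1: "card {k. k < 6 \<and> lam k = 1} = 2"
proof -
  have "card {k. k < 6 \<and> lam k = 1} = card {0, 2 :: nat}"
    using basis_eigen third_eigenvalue_less_1
    by (intro card_eigenvalue_eq[OF normA_symmetric v_orthonormal _ basis_orthogonal])
       (auto simp: v_eigen intro!: eigenvector_dot_basis_eq_0)
  then show ?thesis
    by simp
qed

lemma card_lam_eq_third: "card {k. k < 6 \<and> lam k = third_eigenvalue tc} = 1"
proof -
  have "card {k. k < 6 \<and> lam k = third_eigenvalue tc} = card {3 :: nat}"
    using basis_eigen third_eigenvalue_pos third_eigenvalue_less_1
    by (intro card_eigenvalue_eq[OF normA_symmetric v_orthonormal _ basis_orthogonal])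
       (auto simp: v_eigen intro!: eigenvector_dot_basis_eq_0)
  then show ?thesis
    by simp
qed

lemma lam_not_above_third:
  assumes "third_eigenvalue tc < l" "l \<noteq> 1" "k < 6"
  shows "lam k \<noteq> l"
proof -
  have "card {k. k < 6 \<and> lam k = l} = card ({} :: nat set)"
    using assms(1,2) third_eigenvalue_pos
    by (intro card_eigenvalue_eq[OF normA_symmetric v_orthonormal _ basis_orthogonal])
       (auto simp: v_eigen intro!: eigenvector_dot_basis_eq_0)
  then show ?thesis
    using assms(3) by auto
qed

lemma lam_le_1: "k < 6 \<Longrightarrow> lam k \<le> 1"
  using lam_not_above_third[of "lam k" k] third_eigenvalue_less_1 by fastforce

lemma top_eigenvalues: "lam 0 = 1 \<and> lam 1 = 1 \<and> lam 2 = third_eigenvalue tc"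
proof -
  have lam1: "lam 1 = 1"
  proof (rule ccontr)
    assume "lam 1 \<noteq> 1"
    then have below: "lam k < 1" if "1 \<le> k" "k < 6" for k
      using lam_antimono[OF that] lam_le_1[of 1] by simp
    have "k = 0" if "k < 6" "lam k = 1" for k
      using that below[of k] by (cases "k = 0") auto
    then have "{k. k < 6 \<and> lam k = 1} \<subseteq> {0}"
      by auto
    then show False
      using card_mono[of "{0}" "{k. k < 6 \<and> lam k = 1}"] card_lam_eq_1 by simp
  qed
  moreover have lam0: "lam 0 = 1"
    using lam_antimono[of 0 1] lam_le_1[of 0] lam1 by simp
  moreover have lam2_less: "lam 2 < 1"
  proof -
    have "lam 2 \<noteq> 1"
    proof
      assume "lam 2 = 1"
      then have "{0, 1, 2} \<subseteq> {k. k < 6 \<and> lam k = 1}"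
        using lam0 lam1 by auto
      then show False
        using card_mono[of "{k. k < 6 \<and> lam k = 1}" "{0, 1, 2 :: nat}"] card_lam_eq_1 by simp
    qed
    then show ?thesis
      using lam_le_1[of 2] by simp
  qed
  moreover have "lam 2 = third_eigenvalue tc"
  proof (rule ccontr)
    assume ne: "lam 2 \<noteq> third_eigenvalue tc"
    show False
    proof (cases "third_eigenvalue tc < lam 2")
      case True
      then show False
        using lam_not_above_third[of "lam 2" 2] lam2_less by simp
    next
      case False
      then have below: "lam k < third_eigenvalue tc" if "2 \<le> k" "k < 6" for k
        using ne lam_antimono[OF that] by simp
      have "lam k \<noteq> third_eigenvalue tc" if "k < 6" for k
      proof (cases "2 \<le> k")
        case True
        then show ?thesis using below[OF True that] by simp
      next
        case False
        then have "k = 0 \<or> k = 1" by auto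
        then show ?thesis using lam0 lam1 third_eigenvalue_less_1 by auto
      qed
      then have "{k. k < 6 \<and> lam k = third_eigenvalue tc} = {}"
        by auto
      then have "card {k. k < 6 \<and> lam k = third_eigenvalue tc} = 0"
        by simp
      with card_lam_eq_third show False
        by simp
    qed
  qed
  ultimately show ?thesis
    by simp
qed

lemma lam_below_third: "3 \<le> k \<Longrightarrow> k < 6 \<Longrightarrow> lam k < third_eigenvalue tc"
proof -
  assume k: "3 \<le> k" "k < 6"
  have "lam 3 \<noteq> third_eigenvalue tc"
  proof
    assume "lam 3 = third_eigenvalue tc"
    then have "{2, 3} \<subseteq> {k. k < 6 \<and> lam k = third_eigenvalue tc}"
      using top_eigenvalues by auto
    then show False
      using card_mono[of "{k. k < 6 \<and> lam k = third_eigenvalue tc}" "{2, 3 :: nat}"]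
        card_lam_eq_third by simp
  qed
  then show ?thesis
    using lam_antimono[OF k] lam_antimono[of 2 3] top_eigenvalues by simp
qed

lemma sin_theta_eq_0: "sin_theta_frob 3 v v_hat = 0"
proof (rule sin_theta_frob_eq_0[OF v_orthonormal])
  show "\<forall>b<3. 0 < dot 6 (v_hat b) (v_hat b)"
    by (auto simp: less_Suc_eq numeral_3_eq_3 dot_def sum6 v_hat_def Defs.vec_of_list_def)
  show "\<forall>a b. 3 \<le> a \<longrightarrow> a < 6 \<longrightarrow> b < 3 \<longrightarrow> dot 6 (v a) (v_hat b) = 0"
  proof (intro allI impI)
    fix a b :: nat
    assume a: "3 \<le> a" "a < 6" and b: "b < 3"
    have "lam a < third_eigenvalue tc"
      using lam_below_third[OF a] .
    then have "dot 6 (v a) (basis j) = 0" if "j = 0 \<or> j = 2 \<or> j = 3" for j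
      using that third_eigenvalue_less_1
      by (intro eigenvector_dot_basis_eq_0[OF v_eigen[OF a(2)]]) auto
    then show "dot 6 (v a) (v_hat b) = 0"
      using b by (intro dot_v_hat_eq_0) auto
  qed
qed simp

end

lemma params_pos:
  fixes t1 tc ts :: real
  assumes "ts / t1 < tc / t1" "0 < ts / t1" "ts \<le> tc"
  shows "0 < t1"
proof (rule ccontr)
  assume "\<not> 0 < t1"
  then have "t1 < 0"
    using assms(2) by (cases "t1 = 0") auto
  then have "tc < ts"
    using assms(1) by (simp add: divide_less_cancel)
  then show False
    using assms(3) by simp
qed

lemma third_eigenvalue_error:
  fixes t1 tc ts :: real
  assumes t1: "0 < t1" and tc: "0 < tc" and ts: "0 < ts" "ts \<le> tc"
    and sum: "t1 + tc + ts = 1" and small: "tc < 1/100"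
  shows "\<bar>third_eigenvalue tc - lam_hat t1 tc 2\<bar> \<le> 100 * (tc / t1)^2"
proof -
  define e where "e = tc / t1"
  have "tc * t1 \<le> tc"
    using tc t1 ts sum by (simp add: mult_left_le)
  then have tc_le_e: "tc \<le> e"
    using t1 by (simp add: e_def le_divide_eq)
  have "1 - t1 = tc + ts"
    using sum by simp
  have "e - tc = tc * (1 - t1) / t1"
    using t1 by (simp add: e_def field_simps)
  also have "\<dots> = tc * (tc + ts) / t1"
    by (simp only: \<open>1 - t1 = tc + ts\<close>)
  also have "\<dots> \<le> 2 * e * tc"
    using t1 tc ts by (simp add: e_def divide_right_mono mult_left_mono)
  also have "\<dots> \<le> 2 * e^2"
    using tc_le_e tc by (simp add: power2_eq_square)
  finally have "e - tc \<le> 2 * e^2" .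
  have "tc^2 \<le> e^2"
    using tc_le_e tc by (simp add: power_mono)
  have "third_eigenvalue tc - lam_hat t1 tc 2
      = (third_eigenvalue tc - (1 - 16/3 * tc)) + 16/3 * (e - tc)"
    using t1 by (simp add: lam_hat_def e_def field_simps)
  then have "\<bar>third_eigenvalue tc - lam_hat t1 tc 2\<bar>
      \<le> \<bar>third_eigenvalue tc - (1 - 16/3 * tc)\<bar> + 16/3 * (e - tc)"
    using tc_le_e abs_triangle_ineq[of "third_eigenvalue tc - (1 - 16/3 * tc)" "16/3 * (e - tc)"]
    by simp
  also have "\<dots> \<le> 13 * tc^2 + 16/3 * (2 * e^2)"
    using third_eigenvalue_approx[OF tc small] \<open>e - tc \<le> 2 * e^2\<close> by (intro add_mono) auto
  also have "\<dots> \<le> 100 * e^2"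
    using \<open>tc^2 \<le> e^2\<close> zero_le_power2[of e] by linarith
  finally show ?thesis
    by (simp add: e_def)
qed

lemma toy_graph_eigen_bounds:
  fixes t1 tc ts :: real
  assumes "tc / t1 < 1/100" "ts / t1 < tc / t1" "0 < ts / t1" "4/9 * tc \<le> ts" "ts \<le> tc"
    "t1 + tc + ts = 1" "sorted_orthonormal_eigenbasis (normA t1 tc ts) lam v"
  shows "(\<forall>k<3. \<bar>lam k - lam_hat t1 tc k\<bar> \<le> 100 * (tc / t1)^2) \<and>
    sin_theta_frob 3 v v_hat \<le> 100 * (tc / t1)"
proof -
  have t1: "0 < t1" and ts: "0 < ts" and tc: "0 < tc"
    using params_pos[OF assms(2,3,5)] assms(3,5) by (auto simp: zero_less_divide_iff)
  have "tc \<le> tc / t1"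
    using t1 ts tc assms(6) by (simp add: le_divide_eq mult_left_le)
  then have small: "tc < 1/100"
    using assms(1) by linarith
  interpret toy_graph_spectrum t1 tc ts lam v
    using t1 tc ts small assms(4-7) by unfold_locales auto
  have "\<bar>lam 2 - lam_hat t1 tc 2\<bar> \<le> 100 * (tc / t1)^2"
    using third_eigenvalue_error[OF t1 tc ts assms(5,6) small] top_eigenvalues by simp
  then have "\<bar>lam k - lam_hat t1 tc k\<bar> \<le> 100 * (tc / t1)^2" if "k < 3" for k
    using that top_eigenvalues by (auto simp: less_Suc_eq numeral_3_eq_3 lam_hat_def)
  then show ?thesis
    using sin_theta_eq_0 t1 tc by simp
qed

theorem theorem6:
  shows "\<exists>C \<delta>. C > 0 \<and> \<delta> > 0 \<and>
    (\<forall>t1 tc ts :: real. \<forall>lam v.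
       tc / t1 < \<delta> \<and> tc / t1 > ts / t1 \<and> ts / t1 > 0 \<and>
       4/9 * tc \<le> ts \<and> ts \<le> tc \<and> t1 + tc + ts = 1 \<and>
       sorted_orthonormal_eigenbasis (normA t1 tc ts) lam v \<longrightarrow>
         (\<forall>k<3. \<bar>lam k - lam_hat t1 tc k\<bar> \<le> C * (tc / t1)^2) \<and>
         sin_theta_frob 3 v v_hat \<le> C * (tc / t1))"
  using toy_graph_eigen_bounds by (intro exI[of _ 100] exI[of _ "1/100"]) auto

end
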